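(* For $n>1/2$ and $x\ge 0$ the following holds: \begin{equation*} \frac{2}{x+\sqrt{4n+2+x^2}}<\frac{U(n,x)}{U (n-1,x)}<\frac{2}{x+\sqrt{4n-2+x^2}} . \end{equation*} The lower bound also holds if $n\in (-1/2,1/2)$, and it turns into an equality if $n=-1/2$.
   Context: $U(a,x)$ denotes the standard parabolic cylinder function (as in the NIST Digital Library of Mathematical Functions, Chapter 12), i.e. the solution of $y''(x)-(x^2/4+a)y(x)=0$ that is recessive (decays) as $x\rightarrow+\infty$. The parameter $n$ is real. *)

theory Defs
  imports "HOL-Analysis.Analysis"
begin

text \<open>Parabolic cylinder function U(a,x) (DLMF 12.2, 12.9.1): the unique solution of
  y'' = (x^2/4 + a) y on the real line with y(x) ~ x^(-a-1/2) exp(-x^2/4) as x tends to +infinity.\<close>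

definition pcf_U :: "real \<Rightarrow> real \<Rightarrow> real" where
  "pcf_U a = (THE f. (\<exists>f'. \<forall>x. (f has_real_derivative f' x) (at x) \<and>
                          (f' has_real_derivative (x^2/4 + a) * f x) (at x)) \<and>
                ((\<lambda>x. f x / (x powr (-a - 1/2) * exp (-(x^2)/4))) \<longlongrightarrow> 1) at_top)"

end

theory Submission
  imports Defs "HOL-Real_Asymp.Real_Asymp"
begin

text \<open>
  For \<open>k > 0\<close> let \<open>V\<^sub>k(x) = \<integral>\<^sub>0\<^sup>\<infinity> t\<^sup>k\<^sup>-\<^sup>1 exp(-t\<^sup>2/2 - x t) dt\<close>.
  Differentiating under the integral sign gives \<open>V\<^sub>k' = -V\<^sub>k\<^sub>+\<^sub>1\<close>, and integrating by parts gives
  \<open>V\<^sub>k\<^sub>+\<^sub>2 + x V\<^sub>k\<^sub>+\<^sub>1 = k V\<^sub>k\<close>. Consequently \<open>exp(-x\<^sup>2/4) V\<^sub>k(x) / \<Gamma>(k)\<close> solves Weber's equation with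
  \<open>a = k - 1/2\<close>, and since \<open>x\<^sup>k V\<^sub>k(x) \<rightarrow> \<Gamma>(k)\<close> it has the normalised decay of \<open>U(k - 1/2, x)\<close>, which
  characterises \<open>U\<close> uniquely. The recurrence \<open>U(a - 1, x) = x/2 U(a, x) - U'(a, x)\<close> then shows
  \<open>U(n, x) / U(n - 1, x) = V\<^sub>k / (x V\<^sub>k + V\<^sub>k\<^sub>+\<^sub>1)\<close> with \<open>k = n + 1/2\<close>. Comparing this ratio with
  \<open>2 / (x + sqrt(x\<^sup>2 + 4c))\<close> amounts to comparing \<open>V\<^sub>k\<^sub>+\<^sub>1\<^sup>2 + x V\<^sub>k V\<^sub>k\<^sub>+\<^sub>1\<close> with \<open>c V\<^sub>k\<^sup>2\<close>, and after
  eliminating \<open>V\<^sub>k\<^sub>+\<^sub>2\<close> resp. \<open>V\<^sub>k\<^sub>-\<^sub>1\<close> with the recurrence both bounds become the strict Cauchy-Schwarz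
  inequality \<open>V\<^sub>j\<^sub>+\<^sub>1\<^sup>2 < V\<^sub>j V\<^sub>j\<^sub>+\<^sub>2\<close>, taken at \<open>j = k\<close> for the lower and at \<open>j = k - 1\<close> for the upper
  bound. For \<open>n = -1/2\<close> everything is explicit: \<open>U(-1/2, x) = exp(-x\<^sup>2/4)\<close>, \<open>U(-3/2, x) = x exp(-x\<^sup>2/4)\<close>.
\<close>

section \<open>The integrals \<open>V\<^sub>k\<close>\<close>

definition pcf_kernel :: "real \<Rightarrow> real \<Rightarrow> real \<Rightarrow> real" where
  "pcf_kernel k x t = t powr (k - 1) * exp (-(t^2)/2 - x*t)"

definition pcf_integral :: "real \<Rightarrow> real \<Rightarrow> real" where
  "pcf_integral k x = (LINT t:{0<..}|lborel. pcf_kernel k x t)"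

lemma pcf_kernel_measurable [measurable]: "pcf_kernel k x \<in> borel_measurable borel"
  unfolding pcf_kernel_def by measurable

lemma pcf_kernel_nonneg: "pcf_kernel k x t \<ge> 0"
  unfolding pcf_kernel_def by simp

lemma pcf_kernel_pos: "t > 0 \<Longrightarrow> pcf_kernel k x t > 0"
  unfolding pcf_kernel_def by simp

lemma pcf_kernel_add_one: "t > 0 \<Longrightarrow> pcf_kernel (k + 1) x t = t * pcf_kernel k x t"
  unfolding pcf_kernel_def using powr_add[of t "k - 1" 1] by simp

lemma pcf_kernel_shift: "pcf_kernel k (x + h) t = pcf_kernel k x t * exp (-(h*t))"
proof -
  have "-(t^2)/2 - (x + h)*t = (-(t^2)/2 - x*t) + (-(h*t))"
    by (simp add: algebra_simps)
  then show ?thesis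
    by (simp only: pcf_kernel_def exp_add mult.assoc)
qed

lemma pcf_kernel_has_derivative:
  assumes "t > 0"
  shows "((\<lambda>x. pcf_kernel k x t) has_real_derivative - pcf_kernel (k + 1) x t) (at x)"
proof -
  have "((\<lambda>x. pcf_kernel k x t) has_real_derivative pcf_kernel k x t * (- t)) (at x)"
    unfolding pcf_kernel_def by (auto intro!: derivative_eq_intros)
  then show ?thesis
    by (simp add: pcf_kernel_add_one[OF assms] mult.commute)
qed

lemma Gamma_set_integrable:
  fixes k :: real
  assumes "k > 0"
  shows "set_integrable lborel {0<..} (\<lambda>t. t powr (k - 1) * exp (-t))"
proof -
  have eq: "(\<lambda>t. indicator {0<..} t *\<^sub>R (t powr (k - 1) * exp (-t))) =
            (\<lambda>t::real. indicator {0..} t * t powr (k - 1) / exp t)"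
    by (auto simp: fun_eq_iff indicator_def exp_minus field_simps)
  show ?thesis
    unfolding set_integrable_def eq
  proof (rule integrableI_nn_integral_finite[where x="Gamma k"])
    show "(\<lambda>t::real. indicator {0..} t * t powr (k - 1) / exp t) \<in> borel_measurable lborel"
      by measurable
  qed (use Gamma_conv_nn_integral_real[OF assms] in \<open>auto simp: indicator_def\<close>)
qed

lemma Gamma_eq_set_integral:
  fixes k :: real
  assumes "k > 0"
  shows "(LINT t:{0<..}|lborel. t powr (k - 1) * exp (-t)) = Gamma k"
proof -
  have "((\<lambda>t. t powr (k - 1) * exp (-t)) has_integral Gamma k) {0..}"
    using Gamma_integral_real[OF assms] by (simp add: exp_minus divide_inverse)
  then have "((\<lambda>t. t powr (k - 1) * exp (-t)) has_integral Gamma k) {0<..}"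
    by (subst (asm) has_integral_spike_set_eq) (auto intro: negligible_subset[of "{0}"])
  then show ?thesis
    using set_borel_integral_eq_integral(2)[OF Gamma_set_integrable[OF assms]]
    by (simp add: integral_unique)
qed

lemma set_integrable_pcf_kernel:
  assumes "k > 0"
  shows "set_integrable lborel {0<..} (pcf_kernel k x)"
proof -
  define C where "C = exp ((1 - x)^2/2)"
  have "set_integrable lborel {0<..} (\<lambda>t. C * (t powr (k - 1) * exp (-t)))"
    by (intro set_integrable_mult_right Gamma_set_integrable assms)
  then show ?thesis
    unfolding set_integrable_def
  proof (rule Bochner_Integration.integrable_bound)
    show "(\<lambda>t. indicator {0<..} t *\<^sub>R pcf_kernel k x t) \<in> borel_measurable lborel"
      by measurable
    show "AE t in lborel. norm (indicator {0<..} t *\<^sub>R pcf_kernel k x t)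
            \<le> norm (indicator {0<..} t *\<^sub>R (C * (t powr (k - 1) * exp (-t))))"
    proof (rule AE_I2)
      fix t :: real
      \<comment> \<open>\<open>-t\<^sup>2/2 - x t = (1 - x)\<^sup>2/2 - t - (t - (1 - x))\<^sup>2/2\<close>\<close>
      have "-(t^2)/2 - x*t \<le> (1 - x)^2/2 + (-t)"
        using sum_squares_ge_zero[of "t - (1 - x)" 0] by (simp add: power2_eq_square algebra_simps)
      then have "exp (-(t^2)/2 - x*t) \<le> C * exp (-t)"
        by (simp add: C_def exp_add[symmetric])
      then have "t powr (k - 1) * exp (-(t^2)/2 - x*t) \<le> t powr (k - 1) * (C * exp (-t))"
        by (intro mult_left_mono) auto
      then show "norm (indicator {0<..} t *\<^sub>R pcf_kernel k x t)
            \<le> norm (indicator {0<..} t *\<^sub>R (C * (t powr (k - 1) * exp (-t))))"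
        by (auto simp: indicator_def pcf_kernel_def C_def mult_ac)
    qed
  qed
qed

lemma pcf_integral_recurrence:
  fixes k x :: real
  assumes k: "k > 0"
  shows "pcf_integral (k + 2) x + x * pcf_integral (k + 1) x = k * pcf_integral k x"
proof -
  define F where "F = (\<lambda>t::real. t powr k * exp (-(t^2)/2 - x*t))"
  define f where "f = (\<lambda>t. k * pcf_kernel k x t - (pcf_kernel (k + 2) x t + x * pcf_kernel (k + 1) x t))"
  have integrable: "set_integrable lborel {0<..} (pcf_kernel k x)"
    "set_integrable lborel {0<..} (pcf_kernel (k + 1) x)"
    "set_integrable lborel {0<..} (pcf_kernel (k + 2) x)"
    using set_integrable_pcf_kernel k by simp_all
  then have f_integrable: "set_integrable lborel {0<..} f"
    unfolding f_def
    by (intro set_integral_diff(1) set_integral_add(1) set_integrable_mult_right)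
  have "(LBINT t=ereal 0..\<infinity>. f t) = 0 - 0"
  proof (rule interval_integral_FTC_integrable)
    fix t assume "ereal 0 < ereal t" "ereal t < \<infinity>"
    then have t: "t > 0" by simp
    have "(F has_real_derivative
            k * t powr (k - 1) * exp (-(t^2)/2 - x*t) + t powr k * (exp (-(t^2)/2 - x*t) * (-(2*t)/2 - x)))
          (at t)"
      unfolding F_def using t by (auto intro!: derivative_eq_intros simp: power2_eq_square)
    moreover have "k * t powr (k - 1) * exp (-(t^2)/2 - x*t)
                   + t powr k * (exp (-(t^2)/2 - x*t) * (-(2*t)/2 - x)) = f t"
      using t by (simp add: f_def pcf_kernel_def powr_add algebra_simps)
    ultimately show "(F has_vector_derivative f t) (at t)"
      by (simp add: has_real_derivative_iff_has_vector_derivative)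
    show "isCont f t"
      unfolding f_def pcf_kernel_def using t by (auto intro!: continuous_intros)
  next
    show "set_integrable lborel (einterval (ereal 0) \<infinity>) f"
      using f_integrable by (simp add: einterval_def greaterThan_def)
    show "((F \<circ> real_of_ereal) \<longlongrightarrow> 0) (at_right (ereal 0))"
      unfolding ereal_tendsto_simps F_def using k by real_asymp
    show "((F \<circ> real_of_ereal) \<longlongrightarrow> 0) (at_left \<infinity>)"
      unfolding ereal_tendsto_simps F_def using k by real_asymp
  qed simp
  then have "(LINT t:{0<..}|lborel. f t) = 0"
    using interval_lebesgue_integral_0_infty(2)[of lborel f] by (simp add: zero_ereal_def)
  moreover have "(LINT t:{0<..}|lborel. f t)
                 = k * pcf_integral k x - (pcf_integral (k + 2) x + x * pcf_integral (k + 1) x)"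
    unfolding f_def pcf_integral_def
    using integrable by (simp add: set_integral_diff(2) set_integral_add(2) set_integral_add(1)
        set_integrable_mult_right)
  ultimately show ?thesis by simp
qed

lemma abs_exp_minus_one_le: "\<bar>exp y - 1\<bar> \<le> \<bar>y\<bar> * exp \<bar>y\<bar>" for y :: real
proof (cases "y \<ge> 0")
  case True
  have "1 - y \<le> exp (-y)" using exp_ge_add_one_self[of "-y"] by simp
  then have "(1 - y) * exp y \<le> 1"
    using mult_right_mono[of "1 - y" "exp (-y)" "exp y"] by (simp add: exp_minus)
  then show ?thesis using True by (simp add: algebra_simps)
next
  case False
  have "exp y \<ge> 1 + y" "exp y \<le> 1" "1 \<le> exp \<bar>y\<bar>"
    using exp_ge_add_one_self[of y] False by auto
  then show ?thesis using False
    by (smt (verit) mult_le_cancel_left1)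
qed

lemma pcf_kernel_difference_quotient_bound:
  assumes t: "t > 0" and h: "h \<noteq> 0" "\<bar>h\<bar> \<le> B"
  shows "\<bar>(pcf_kernel k (x + h) t - pcf_kernel k x t) / h\<bar> \<le> pcf_kernel (k + 1) (x - B) t"
proof -
  have "\<bar>exp (-(h*t)) - 1\<bar> \<le> \<bar>-(h*t)\<bar> * exp \<bar>-(h*t)\<bar>"
    by (rule abs_exp_minus_one_le)
  also have "\<dots> \<le> \<bar>h\<bar> * t * exp (B * t)"
    using t h by (intro mult_mono) (auto simp: abs_mult mult_right_mono)
  finally have "\<bar>exp (-(h*t)) - 1\<bar> / \<bar>h\<bar> \<le> t * exp (B * t)"
    using h by (simp add: divide_le_eq mult_ac)
  then have "pcf_kernel k x t * (\<bar>exp (-(h*t)) - 1\<bar> / \<bar>h\<bar>) \<le> pcf_kernel k x t * (t * exp (B * t))"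
    by (intro mult_left_mono pcf_kernel_nonneg)
  moreover have "pcf_kernel k (x + h) t - pcf_kernel k x t = pcf_kernel k x t * (exp (-(h*t)) - 1)"
    using pcf_kernel_shift[of k x h t] by (simp add: right_diff_distrib)
  then have "\<bar>(pcf_kernel k (x + h) t - pcf_kernel k x t) / h\<bar>
             = pcf_kernel k x t * (\<bar>exp (-(h*t)) - 1\<bar> / \<bar>h\<bar>)"
    by (simp add: abs_divide abs_mult abs_of_nonneg[OF pcf_kernel_nonneg])
  moreover have "pcf_kernel k x t * (t * exp (B * t)) = pcf_kernel (k + 1) (x - B) t"
    using pcf_kernel_shift[of k x "-B" t] pcf_kernel_add_one[OF t, of k "x - B"] by (simp add: mult_ac)
  ultimately show ?thesis
    using h(1) by simp
qed

lemma pcf_integral_difference_quotient: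
  assumes "k > 0"
  shows "(pcf_integral k (x + h) - pcf_integral k x) / h
         = (LINT t:{0<..}|lborel. (pcf_kernel k (x + h) t - pcf_kernel k x t) / h)"
proof -
  have "(pcf_integral k (x + h) - pcf_integral k x) / h
        = (LINT t:{0<..}|lborel. pcf_kernel k (x + h) t - pcf_kernel k x t) / h"
    unfolding pcf_integral_def using set_integrable_pcf_kernel[OF assms]
    by (simp add: set_integral_diff(2))
  also have "\<dots> = (LINT t:{0<..}|lborel. (pcf_kernel k (x + h) t - pcf_kernel k x t) / h)"
    by (simp add: set_integral_divide_zero)
  finally show ?thesis .
qed

lemma pcf_integral_difference_quotient_tendsto:
  fixes H :: "nat \<Rightarrow> real"
  assumes k: "k > 0" and H_ne: "\<And>i. H i \<noteq> 0" and H_lim: "H \<longlonglongrightarrow> 0"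
  shows "(\<lambda>i. (pcf_integral k (x + H i) - pcf_integral k x) / H i) \<longlonglongrightarrow> - pcf_integral (k + 1) x"
proof -
  have "Bseq H"
    using H_lim by (intro convergent_imp_Bseq convergentI)
  then obtain B where B: "\<And>i. \<bar>H i\<bar> \<le> B"
    unfolding Bseq_def by auto
  define s where
    "s = (\<lambda>i t. indicator {0<..} t *\<^sub>R ((pcf_kernel k (x + H i) t - pcf_kernel k x t) / H i))"
  define g where "g = (\<lambda>t. indicator {0<..} t *\<^sub>R - pcf_kernel (k + 1) x t)"
  define w where "w = (\<lambda>t. indicator {0<..} t *\<^sub>R pcf_kernel (k + 1) (x - B) t)"
  have "(\<lambda>i. integral\<^sup>L lborel (s i)) \<longlonglongrightarrow> integral\<^sup>L lborel g"
  proof (rule integral_dominated_convergence[where w=w])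
    show "g \<in> borel_measurable lborel" unfolding g_def by measurable
    show "s i \<in> borel_measurable lborel" for i unfolding s_def by measurable
    show "integrable lborel w"
      using set_integrable_pcf_kernel[of "k + 1"] k by (simp add: w_def set_integrable_def)
    show "AE t in lborel. (\<lambda>i. s i t) \<longlonglongrightarrow> g t"
    proof (rule AE_I2)
      fix t :: real
      show "(\<lambda>i. s i t) \<longlonglongrightarrow> g t"
      proof (cases "t > 0")
        case True
        have "((\<lambda>h. (pcf_kernel k (x + h) t - pcf_kernel k x t) / h) \<longlongrightarrow> - pcf_kernel (k + 1) x t)
                (at 0)"
          using pcf_kernel_has_derivative[OF True, of k x] unfolding DERIV_def .
        then have "((\<lambda>h. (pcf_kernel k (x + h) t - pcf_kernel k x t) / h) \<circ> H)
                     \<longlonglongrightarrow> - pcf_kernel (k + 1) x t"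
          using H_ne H_lim unfolding tendsto_at_iff_sequentially by blast
        then show ?thesis
          using True by (simp add: s_def g_def o_def)
      qed (simp add: s_def g_def)
    qed
    show "AE t in lborel. norm (s i t) \<le> w t" for i
      using pcf_kernel_difference_quotient_bound[of _ "H i" B k x] H_ne B
      by (intro AE_I2) (auto simp: s_def w_def indicator_def)
  qed
  moreover have "integral\<^sup>L lborel (s i) = (pcf_integral k (x + H i) - pcf_integral k x) / H i" for i
    unfolding s_def pcf_integral_difference_quotient[OF k] set_lebesgue_integral_def by simp
  moreover have "integral\<^sup>L lborel g = - pcf_integral (k + 1) x"
    unfolding g_def pcf_integral_def set_lebesgue_integral_def by simp
  ultimately show ?thesis
    by simp
qed

lemma pcf_integral_has_derivative:
  assumes "k > 0"
  shows "(pcf_integral k has_real_derivative - pcf_integral (k + 1) x) (at x)"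
  unfolding DERIV_def tendsto_at_iff_sequentially o_def
  by (auto intro!: pcf_integral_difference_quotient_tendsto[OF assms])

lemma set_integral_Ioi_pos:
  fixes h :: "real \<Rightarrow> real"
  assumes int: "set_integrable lborel {0<..} h"
    and nonneg: "\<And>t. t > 0 \<Longrightarrow> h t \<ge> 0"
    and pos: "\<And>t. t > 0 \<Longrightarrow> t \<noteq> p \<Longrightarrow> h t > 0"
  shows "(LINT t:{0<..}|lborel. h t) > 0"
proof -
  define F where "F = (\<lambda>t. indicator {0<..} t *\<^sub>R h t)"
  have F_int: "integrable lborel F"
    using int unfolding F_def set_integrable_def .
  have F_nonneg: "AE t in lborel. 0 \<le> F t"
    by (rule AE_I2) (auto simp: F_def indicator_def nonneg)
  have "integral\<^sup>L lborel F \<noteq> 0"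
  proof
    assume "integral\<^sup>L lborel F = 0"
    then have "AE t in lborel. F t = 0"
      using integral_nonneg_eq_0_iff_AE[OF F_int F_nonneg] by simp
    then have "AE t in lborel. (t::real) \<notin> {0<..<1}"
      using AE_lborel_singleton[of p]
      by eventually_elim (use pos in \<open>fastforce simp: F_def indicator_def\<close>)
    then have "emeasure lborel {0<..<(1::real)} = 0"
      by (subst (asm) AE_iff_measurable[of "{0<..<1}"]) auto
    then show False by simp
  qed
  with integral_nonneg_AE[OF F_nonneg] show ?thesis
    unfolding set_lebesgue_integral_def F_def by simp
qed

lemma pcf_integral_pos: "k > 0 \<Longrightarrow> pcf_integral k x > 0"
  unfolding pcf_integral_def
  by (rule set_integral_Ioi_pos[where p=0, OF set_integrable_pcf_kernel])
    (auto simp: pcf_kernel_nonneg pcf_kernel_pos)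

lemma pcf_integral_strict_log_convex:
  assumes k: "k > 0"
  shows "(pcf_integral (k + 1) x)^2 < pcf_integral k x * pcf_integral (k + 2) x"
proof -
  define V0 V1 V2 where "V0 = pcf_integral k x" and "V1 = pcf_integral (k + 1) x"
    and "V2 = pcf_integral (k + 2) x"
  have V2: "V2 > 0" unfolding V2_def using pcf_integral_pos k by simp
  have integrable: "set_integrable lborel {0<..} (pcf_kernel k x)"
    "set_integrable lborel {0<..} (pcf_kernel (k + 1) x)"
    "set_integrable lborel {0<..} (pcf_kernel (k + 2) x)"
    using set_integrable_pcf_kernel k by simp_all
  \<comment> \<open>\<open>\<integral>\<^sub>0\<^sup>\<infinity> pcf_kernel k x t (1 - l t)\<^sup>2 dt > 0\<close>; the minimising \<open>l\<close> turns this into \<open>V0 - V1\<^sup>2/V2 > 0\<close>\<close>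
  define l where "l = V1 / V2"
  define h where
    "h = (\<lambda>t. pcf_kernel k x t - 2 * l * pcf_kernel (k + 1) x t + l^2 * pcf_kernel (k + 2) x t)"
  have h_square: "h t = pcf_kernel k x t * (1 - l * t)^2" if "t > 0" for t
    using pcf_kernel_add_one[OF that, of "k + 1" x] pcf_kernel_add_one[OF that, of k x]
    by (simp add: h_def add.assoc power2_eq_square algebra_simps)
  have "(LINT t:{0<..}|lborel. h t) > 0"
  proof (rule set_integral_Ioi_pos[where p="1/l"])
    show "set_integrable lborel {0<..} h"
      unfolding h_def
      using integrable by (intro set_integral_diff(1) set_integral_add(1) set_integrable_mult_right)
    fix t :: real assume t: "t > 0"
    then show "0 \<le> h t" by (simp add: h_square pcf_kernel_nonneg)
    assume "t \<noteq> 1/l"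
    have "1 - l * t \<noteq> 0"
    proof
      assume "1 - l * t = 0"
      then have "l * t = 1" "l \<noteq> 0" by auto
      then have "t = 1/l" by (simp add: eq_divide_eq mult.commute)
      with \<open>t \<noteq> 1/l\<close> show False ..
    qed
    with t show "0 < h t" by (simp add: h_square pcf_kernel_pos)
  qed
  moreover have "(LINT t:{0<..}|lborel. h t) = V0 - 2 * l * V1 + l^2 * V2"
    unfolding h_def V0_def V1_def V2_def pcf_integral_def
    using integrable by (simp add: set_integral_diff(2) set_integral_add(2) set_integral_add(1)
        set_integral_diff(1) set_integrable_mult_right)
  moreover have "V0 - 2 * l * V1 + l^2 * V2 = V0 - V1^2 / V2"
    using V2 unfolding l_def by (simp add: field_simps power2_eq_square)
  ultimately have "V1^2 / V2 < V0"
    by linarith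
  then have "V1^2 < V0 * V2"
    using V2 by (simp add: pos_divide_less_eq)
  then show ?thesis
    unfolding V0_def V1_def V2_def .
qed

lemma pcf_integral_rescaled:
  fixes k x :: real
  assumes x: "x > 0"
  shows "x powr k * pcf_integral k x
         = (LINT u:{0<..}|lborel. u powr (k - 1) * exp (-u) * exp (-((u/x)^2)/2))"
proof -
  define F where "F = (\<lambda>t. indicator {0<..} t *\<^sub>R pcf_kernel k x t)"
  have "pcf_integral k x = (\<integral>t. F t \<partial>lborel)"
    unfolding pcf_integral_def F_def set_lebesgue_integral_def ..
  also have "\<dots> = \<bar>1/x\<bar> *\<^sub>R (\<integral>u. F (0 + (1/x) * u) \<partial>lborel)"
    by (rule lborel_integral_real_affine) (use x in simp)
  finally have "x powr k * pcf_integral k x = (\<integral>u. x powr k * (1/x) * F (u/x) \<partial>lborel)"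
    using x by simp
  also have "\<dots> = (LINT u:{0<..}|lborel. u powr (k - 1) * exp (-u) * exp (-((u/x)^2)/2))"
    unfolding set_lebesgue_integral_def
  proof (intro Bochner_Integration.integral_cong refl)
    fix u :: real
    show "x powr k * (1/x) * F (u/x)
          = indicator {0<..} u *\<^sub>R (u powr (k - 1) * exp (-u) * exp (-((u/x)^2)/2))"
    proof (cases "u > 0")
      case True
      have powr_x: "x powr k * (1/x) = x powr (k - 1)"
        using x powr_add[of x "k - 1" 1] by (simp add: field_simps)
      have powr_u: "(u/x) powr (k - 1) = u powr (k - 1) / x powr (k - 1)"
        using True x by (simp add: powr_divide)
      have "-((u/x)^2)/2 - x * (u/x) = -u + -((u/x)^2)/2"
        using x by simp
      then have exp_eq: "exp (-((u/x)^2)/2 - x * (u/x)) = exp (-u) * exp (-((u/x)^2)/2)"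
        by (simp only: exp_add)
      have "x powr k * (1/x) * F (u/x)
            = x powr (k - 1) * ((u/x) powr (k - 1) * exp (-((u/x)^2)/2 - x * (u/x)))"
        using True x powr_x by (simp add: F_def pcf_kernel_def)
      also have "\<dots> = u powr (k - 1) * exp (-u) * exp (-((u/x)^2)/2)"
        unfolding powr_u exp_eq using x by simp
      finally show ?thesis
        using True by simp
    qed (use x in \<open>simp add: F_def indicator_def divide_less_0_iff field_simps\<close>)
  qed
  finally show ?thesis .
qed

lemma pcf_integral_asymptotic:
  fixes k :: real
  assumes k: "k > 0"
  shows "((\<lambda>x. x powr k * pcf_integral k x) \<longlongrightarrow> Gamma k) at_top"
proof -
  define s where
    "s = (\<lambda>x u::real. indicator {0<..} u *\<^sub>R (u powr (k - 1) * exp (-u) * exp (-((u/x)^2)/2)))"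
  define g where "g = (\<lambda>u::real. indicator {0<..} u *\<^sub>R (u powr (k - 1) * exp (-u)))"
  have "((\<lambda>x. integral\<^sup>L lborel (s x)) \<longlongrightarrow> integral\<^sup>L lborel g) at_top"
  proof (rule integral_dominated_convergence_at_top[where w=g])
    show "g \<in> borel_measurable lborel" unfolding g_def by measurable
    show "s x \<in> borel_measurable lborel" for x unfolding s_def by measurable
    show "integrable lborel g"
      using Gamma_set_integrable[OF k] unfolding g_def set_integrable_def .
    show "AE u in lborel. ((\<lambda>x. s x u) \<longlongrightarrow> g u) at_top"
    proof (rule AE_I2)
      fix u :: real
      have "((\<lambda>x. exp (-((u/x)^2)/2)) \<longlongrightarrow> exp (-(0^2)/2)) at_top"
        by (intro tendsto_intros tendsto_divide_0[OF tendsto_const]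
            filterlim_at_top_imp_at_infinity filterlim_ident) simp
      then have "((\<lambda>x. indicator {0<..} u *\<^sub>R (u powr (k - 1) * exp (-u) * exp (-((u/x)^2)/2)))
                   \<longlongrightarrow> indicator {0<..} u *\<^sub>R (u powr (k - 1) * exp (-u) * 1)) at_top"
        by (intro tendsto_intros) simp_all
      then show "((\<lambda>x. s x u) \<longlongrightarrow> g u) at_top"
        unfolding s_def g_def by simp
    qed
    show "\<forall>\<^sub>F x in at_top. AE u in lborel. norm (s x u) \<le> g u"
      by (intro always_eventually allI AE_I2) (auto simp: s_def g_def indicator_def)
  qed
  moreover have "\<forall>\<^sub>F x in at_top. integral\<^sup>L lborel (s x) = x powr k * pcf_integral k x"
    using eventually_gt_at_top[of 0]
    by eventually_elim (simp add: pcf_integral_rescaled s_def set_lebesgue_integral_def)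
  moreover have "integral\<^sup>L lborel g = Gamma k"
    using Gamma_eq_set_integral[OF k] unfolding g_def set_lebesgue_integral_def .
  ultimately show ?thesis
    using Lim_transform_eventually by fastforce
qed

section \<open>Uniqueness of the recessive solution\<close>

lemma wronskian_constant:
  fixes f f' g g' q :: "real \<Rightarrow> real"
  assumes "\<And>x. (f has_real_derivative f' x) (at x)" "\<And>x. (f' has_real_derivative q x * f x) (at x)"
    and "\<And>x. (g has_real_derivative g' x) (at x)" "\<And>x. (g' has_real_derivative q x * g x) (at x)"
  shows "f x * g' x - f' x * g x = f y * g' y - f' y * g y"
proof (rule DERIV_isconst_all[of "\<lambda>x. f x * g' x - f' x * g x"], intro allI)
  fix x
  have "((\<lambda>x. f x * g' x - f' x * g x) has_real_derivative
          (f' x * g' x + q x * g x * f x) - (q x * f x * g x + g' x * f' x)) (at x)"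
    by (intro DERIV_diff DERIV_mult assms)
  then show "((\<lambda>x. f x * g' x - f' x * g x) has_real_derivative 0) (at x)"
    by (rule DERIV_cong) (simp add: algebra_simps)
qed

lemma zero_if_deriv_le_mult:
  fixes E E' :: "real \<Rightarrow> real"
  assumes "a \<le> b" "E a = 0" "E b \<ge> 0"
    and deriv: "\<And>x. a \<le> x \<Longrightarrow> x \<le> b \<Longrightarrow> (E has_real_derivative E' x) (at x)"
    and bound: "\<And>x. a \<le> x \<Longrightarrow> x \<le> b \<Longrightarrow> E' x \<le> M * E x"
  shows "E b = 0"
proof -
  have "E b * exp (- (M * b)) \<le> E a * exp (- (M * a))"
  proof (rule DERIV_nonpos_imp_nonincreasing[OF \<open>a \<le> b\<close>])
    fix x assume x: "a \<le> x" "x \<le> b"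
    have "((\<lambda>x. E x * exp (- (M * x))) has_real_derivative
            E' x * exp (- (M * x)) + E x * (exp (- (M * x)) * (- M))) (at x)"
      by (auto intro!: derivative_eq_intros deriv[OF x])
    moreover have "(E' x - M * E x) * exp (- (M * x)) \<le> 0"
      using bound[OF x] by (intro mult_nonpos_nonneg) auto
    ultimately show "\<exists>y. ((\<lambda>x. E x * exp (- (M * x))) has_real_derivative y) (at x) \<and> y \<le> 0"
      by (intro exI[of _ "E' x * exp (- (M * x)) + E x * (exp (- (M * x)) * (- M))"])
        (simp add: algebra_simps)
  qed
  then have "E b \<le> 0"
    using assms(2) by (simp add: mult_le_0_iff)
  with assms(3) show ?thesis by simp
qed

text \<open>
  Energy estimate: \<open>E = w\<^sup>2 + w'\<^sup>2\<close> satisfies \<open>E' \<le> M E\<close> on a compact interval, so it cannot leave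
  \<open>0\<close>.
\<close>

lemma linear_ode_zero_forward:
  fixes w w' q :: "real \<Rightarrow> real"
  assumes "a \<le> b" and q: "continuous_on {a..b} q"
    and w: "\<And>x. (w has_real_derivative w' x) (at x)"
    and w': "\<And>x. (w' has_real_derivative q x * w x) (at x)"
    and zero: "w a = 0" "w' a = 0"
  shows "w b = 0"
proof -
  define E where "E = (\<lambda>x. (w x)^2 + (w' x)^2)"
  define E' where "E' = (\<lambda>x. 2 * w x * w' x * (1 + q x))"
  have E_nonneg: "E x \<ge> 0" for x
    by (simp add: E_def)
  have E_deriv: "(E has_real_derivative E' x) (at x)" for x
  proof -
    have "(E has_real_derivative 2 * w x * w' x + 2 * w' x * (q x * w x)) (at x)"
      unfolding E_def by (auto intro!: derivative_eq_intros w w')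
    then show ?thesis
      by (rule DERIV_cong) (simp add: E'_def algebra_simps)
  qed
  have "bounded ((\<lambda>x. 1 + q x) ` {a..b})"
    using q by (intro compact_imp_bounded compact_continuous_image continuous_intros) auto
  then obtain M where "\<forall>z\<in>(\<lambda>x. 1 + q x) ` {a..b}. norm z \<le> M"
    unfolding bounded_iff by blast
  then have M: "\<bar>1 + q x\<bar> \<le> M" if "a \<le> x" "x \<le> b" for x
    using that by auto
  have E'_le: "E' x \<le> M * E x" if "a \<le> x" "x \<le> b" for x
  proof -
    have "2 * (\<bar>w x\<bar> * \<bar>w' x\<bar>) \<le> E x"
      using sum_squares_ge_zero[of "\<bar>w x\<bar> - \<bar>w' x\<bar>" 0]
      by (simp add: E_def power2_eq_square algebra_simps)
    then have "2 * (\<bar>w x\<bar> * \<bar>w' x\<bar>) * \<bar>1 + q x\<bar> \<le> E x * M"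
      using M[OF that] E_nonneg[of x] by (intro mult_mono) auto
    moreover have "\<bar>E' x\<bar> = 2 * (\<bar>w x\<bar> * \<bar>w' x\<bar>) * \<bar>1 + q x\<bar>"
      by (simp add: E'_def abs_mult mult.assoc)
    ultimately have "\<bar>E' x\<bar> \<le> M * E x"
      by (simp add: mult.commute)
    then show ?thesis
      by (rule abs_le_D1)
  qed
  have "E b = 0"
    by (rule zero_if_deriv_le_mult[OF \<open>a \<le> b\<close> _ E_nonneg E_deriv E'_le])
      (use zero in \<open>simp add: E_def\<close>)
  then show ?thesis
    by (simp add: E_def add_nonneg_eq_0_iff)
qed

lemma linear_ode_zero_initial_imp_zero:
  fixes w w' q :: "real \<Rightarrow> real"
  assumes q: "continuous_on UNIV q"
    and w: "\<And>x. (w has_real_derivative w' x) (at x)"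
    and w': "\<And>x. (w' has_real_derivative q x * w x) (at x)"
    and zero: "w x0 = 0" "w' x0 = 0"
  shows "w y = 0"
proof (cases "x0 \<le> y")
  case True
  show ?thesis
    by (rule linear_ode_zero_forward[OF True continuous_on_subset[OF q] w w' zero]) simp
next
  case False
  \<comment> \<open>\<open>x \<mapsto> w (-x)\<close> solves the reflected equation, with coefficient \<open>x \<mapsto> q (-x)\<close>\<close>
  have "w (- (- y)) = 0"
  proof (rule linear_ode_zero_forward
      [where a="- x0" and b="- y" and q="\<lambda>x. q (- x)" and w="\<lambda>x. w (- x)" and w'="\<lambda>x. - w' (- x)"])
    show "continuous_on {- x0..- y} (\<lambda>x. q (- x))"
      by (intro continuous_on_compose2[OF q] continuous_intros) auto
    show "((\<lambda>x. w (- x)) has_real_derivative - w' (- x)) (at x)" for x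
      using DERIV_chain2[OF w[of "- x"] DERIV_minus[OF DERIV_ident]] by simp
    show "((\<lambda>x. - w' (- x)) has_real_derivative q (- x) * w (- x)) (at x)" for x
      using DERIV_minus[OF DERIV_chain2[OF w'[of "- x"] DERIV_minus[OF DERIV_ident]]] by simp
  qed (use False zero in auto)
  then show ?thesis by simp
qed

lemma linear_ode_eventually_zero_imp_zero:
  fixes w w' q :: "real \<Rightarrow> real"
  assumes q: "continuous_on UNIV q"
    and w: "\<And>x. (w has_real_derivative w' x) (at x)"
    and w': "\<And>x. (w' has_real_derivative q x * w x) (at x)"
    and "\<forall>\<^sub>F x in at_top. w x = 0"
  shows "w y = 0"
proof -
  obtain N where N: "\<And>x. x \<ge> N \<Longrightarrow> w x = 0"
    using assms(4) by (auto simp: eventually_at_top_linorder)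
  have "\<forall>\<^sub>F x in nhds (N + 1). x \<in> {N<..}"
    by (rule eventually_nhds_in_open) auto
  then have "\<forall>\<^sub>F x in nhds (N + 1). w x = 0"
    by eventually_elim (auto intro: N)
  then have "((\<lambda>_. 0) has_real_derivative w' (N + 1)) (at (N + 1))"
    using w[of "N + 1"] DERIV_cong_ev[of "N + 1" "N + 1" w "\<lambda>_. 0" "w' (N + 1)" "w' (N + 1)"] by simp
  then have w'_N: "w' (N + 1) = 0"
    by (rule DERIV_unique[OF _ DERIV_const])
  have w_N: "w (N + 1) = 0"
    by (rule N) simp
  show ?thesis
    by (rule linear_ode_zero_initial_imp_zero[OF q w w' w_N w'_N])
qed

lemma tendsto_at_top_contradicts_deriv_ge_one:
  fixes q D :: "real \<Rightarrow> real"
  assumes "(q \<longlongrightarrow> l) at_top"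
    and "\<forall>\<^sub>F x in at_top. (q has_real_derivative D x) (at x) \<and> 1 \<le> \<bar>D x\<bar>"
  shows False
proof -
  have "\<forall>\<^sub>F x in at_top. \<bar>q x - l\<bar> < 1/2"
    using tendsto_iff[THEN iffD1, OF assms(1), rule_format, of "1/2"] by (simp add: dist_real_def)
  with assms(2) have "\<forall>\<^sub>F x in at_top. ((q has_real_derivative D x) (at x) \<and> 1 \<le> \<bar>D x\<bar>) \<and> \<bar>q x - l\<bar> < 1/2"
    by (rule eventually_conj)
  then obtain N where
    N: "\<And>x. x \<ge> N \<Longrightarrow> ((q has_real_derivative D x) (at x) \<and> 1 \<le> \<bar>D x\<bar>) \<and> \<bar>q x - l\<bar> < 1/2"
    by (auto simp: eventually_at_top_linorder)
  obtain z where z: "N < z" "q (N + 1) - q N = (N + 1 - N) * D z"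
    using MVT2[of N "N + 1" q D] N by auto
  have "\<bar>q N - l\<bar> < 1/2" "\<bar>q (N + 1) - l\<bar> < 1/2"
    using N[of N] N[of "N + 1"] by auto
  then have "\<bar>q (N + 1) - q N\<bar> < 1"
    unfolding abs_less_iff by auto
  moreover have "1 \<le> \<bar>D z\<bar>"
    using N[of z] z(1) by auto
  ultimately show False
    using z(2) by simp
qed

lemma eventually_eq_limit_if_deriv_zero:
  fixes q :: "real \<Rightarrow> real"
  assumes "(q \<longlongrightarrow> l) at_top" "\<forall>\<^sub>F x in at_top. (q has_real_derivative 0) (at x)"
  shows "\<forall>\<^sub>F x in at_top. q x = l"
proof -
  obtain N where N: "\<And>x. x \<ge> N \<Longrightarrow> (q has_real_derivative 0) (at x)"
    using assms(2) unfolding eventually_at_top_linorder by blast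
  have q_const: "q x = q N" if "x \<ge> N" for x
  proof (cases "x = N")
    case False
    with that have "N < x" by simp
    from MVT2[OF this, of q "\<lambda>_. 0"] N show ?thesis by auto
  qed simp
  have const: "\<forall>\<^sub>F x in at_top. q x = q N"
    using eventually_ge_at_top[of N] by eventually_elim (rule q_const)
  then have "(q \<longlongrightarrow> q N) at_top"
    by (rule tendsto_eventually)
  then have "l = q N"
    using tendsto_unique[OF _ assms(1)] by simp
  with const show ?thesis by simp
qed

text \<open>
  The Wronskian \<open>W = f w' - f' w\<close> of two solutions is constant and \<open>(w/f)' = W/f\<^sup>2\<close>. If \<open>f \<rightarrow> 0\<close>
  and \<open>W \<noteq> 0\<close>, this derivative blows up, which is incompatible with \<open>w/f \<rightarrow> 0\<close>; so \<open>W = 0\<close> and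
  \<open>w/f\<close> is eventually constant, hence eventually \<open>0\<close>.
\<close>

lemma linear_ode_eventually_zero_if_ratio_tendsto_zero:
  fixes f f' w w' q :: "real \<Rightarrow> real"
  assumes f: "\<And>x. (f has_real_derivative f' x) (at x)" "\<And>x. (f' has_real_derivative q x * f x) (at x)"
    and w: "\<And>x. (w has_real_derivative w' x) (at x)" "\<And>x. (w' has_real_derivative q x * w x) (at x)"
    and f_lim: "(f \<longlongrightarrow> 0) at_top" and f_ne: "\<forall>\<^sub>F x in at_top. f x \<noteq> 0"
    and ratio: "((\<lambda>x. w x / f x) \<longlongrightarrow> 0) at_top"
  shows "\<forall>\<^sub>F x in at_top. w x = 0"
proof -
  define W where "W = f 0 * w' 0 - f' 0 * w 0"
  have W: "f x * w' x - f' x * w x = W" for x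
    unfolding W_def by (rule wronskian_constant[OF f w])
  have ratio_deriv: "\<forall>\<^sub>F x in at_top. ((\<lambda>x. w x / f x) has_real_derivative W / (f x)^2) (at x)"
    using f_ne
  proof eventually_elim
    case (elim x)
    have "((\<lambda>x. w x / f x) has_real_derivative (w' x * f x - w x * f' x) / (f x * f x)) (at x)"
      by (rule DERIV_divide[OF w(1) f(1) elim])
    then show ?case
      using W[of x] by (simp add: power2_eq_square algebra_simps)
  qed
  have "W = 0"
  proof (rule ccontr)
    assume "W \<noteq> 0"
    have "((\<lambda>x. (f x)^2) \<longlongrightarrow> 0^2) at_top"
      by (intro tendsto_intros f_lim)
    moreover have "0^2 < \<bar>W\<bar>"
      using \<open>W \<noteq> 0\<close> by simp
    ultimately have "\<forall>\<^sub>F x in at_top. (f x)^2 < \<bar>W\<bar>"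
      by (rule order_tendstoD(2))
    with ratio_deriv f_ne have "\<forall>\<^sub>F x in at_top.
        ((\<lambda>x. w x / f x) has_real_derivative W / (f x)^2) (at x) \<and> 1 \<le> \<bar>W / (f x)^2\<bar>"
      by eventually_elim (simp add: abs_divide le_divide_eq)
    with ratio show False
      by (rule tendsto_at_top_contradicts_deriv_ge_one)
  qed
  then have "\<forall>\<^sub>F x in at_top. w x / f x = 0"
    using ratio_deriv ratio by (intro eventually_eq_limit_if_deriv_zero) simp_all
  with f_ne show ?thesis
    by eventually_elim simp
qed

definition weber_solution :: "real \<Rightarrow> (real \<Rightarrow> real) \<Rightarrow> (real \<Rightarrow> real) \<Rightarrow> bool" where
  "weber_solution a f f' \<longleftrightarrow>
     (\<forall>x. (f has_real_derivative f' x) (at x) \<and> (f' has_real_derivative (x^2/4 + a) * f x) (at x))"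

definition is_pcf_U :: "real \<Rightarrow> (real \<Rightarrow> real) \<Rightarrow> bool" where
  "is_pcf_U a f \<longleftrightarrow> (\<exists>f'. weber_solution a f f') \<and>
     ((\<lambda>x. f x / (x powr (-a - 1/2) * exp (-(x^2)/4))) \<longlongrightarrow> 1) at_top"

lemma is_pcf_U_tendsto_zero:
  assumes "is_pcf_U a f"
  shows "(f \<longlongrightarrow> 0) at_top"
proof -
  define \<phi> where "\<phi> = (\<lambda>x::real. x powr (-a - 1/2) * exp (-(x^2)/4))"
  have "((\<lambda>x. f x / \<phi> x) \<longlongrightarrow> 1) at_top"
    using assms unfolding is_pcf_U_def \<phi>_def by blast
  moreover have "(\<phi> \<longlongrightarrow> 0) at_top"
    unfolding \<phi>_def by real_asymp
  ultimately have "((\<lambda>x. f x / \<phi> x * \<phi> x) \<longlongrightarrow> 1 * 0) at_top"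
    by (rule tendsto_mult)
  moreover have "\<forall>\<^sub>F x in at_top. f x / \<phi> x * \<phi> x = f x"
    using eventually_gt_at_top[of 0] by eventually_elim (simp add: \<phi>_def)
  ultimately show ?thesis
    by (simp add: tendsto_cong)
qed

lemma is_pcf_U_eventually_pos:
  assumes "is_pcf_U a f"
  shows "\<forall>\<^sub>F x in at_top. f x > 0"
proof -
  define \<phi> where "\<phi> = (\<lambda>x::real. x powr (-a - 1/2) * exp (-(x^2)/4))"
  have "((\<lambda>x. f x / \<phi> x) \<longlongrightarrow> 1) at_top"
    using assms unfolding is_pcf_U_def \<phi>_def by blast
  from order_tendstoD(1)[OF this zero_less_one] eventually_gt_at_top[of 0]
  show ?thesis
  proof eventually_elim
    case (elim x)
    moreover have "\<phi> x > 0"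
      using elim by (simp add: \<phi>_def)
    ultimately show ?case
      by (auto simp: zero_less_divide_iff)
  qed
qed

lemma is_pcf_U_ratio_tendsto:
  assumes f: "is_pcf_U a f" and g: "is_pcf_U a g"
  shows "((\<lambda>x. g x / f x) \<longlongrightarrow> 1) at_top"
proof -
  define \<phi> where "\<phi> = (\<lambda>x::real. x powr (-a - 1/2) * exp (-(x^2)/4))"
  have "((\<lambda>x. f x / \<phi> x) \<longlongrightarrow> 1) at_top" "((\<lambda>x. g x / \<phi> x) \<longlongrightarrow> 1) at_top"
    using f g unfolding is_pcf_U_def \<phi>_def by blast+
  then have "((\<lambda>x. (g x / \<phi> x) / (f x / \<phi> x)) \<longlongrightarrow> 1 / 1) at_top"
    by (intro tendsto_intros) simp_all
  moreover have "\<forall>\<^sub>F x in at_top. (g x / \<phi> x) / (f x / \<phi> x) = g x / f x"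
    using eventually_gt_at_top[of 0] is_pcf_U_eventually_pos[OF f]
  proof eventually_elim
    case (elim x)
    then have "\<phi> x \<noteq> 0" "f x \<noteq> 0" by (simp_all add: \<phi>_def)
    then show ?case by (simp add: field_simps)
  qed
  ultimately have "((\<lambda>x. g x / f x) \<longlongrightarrow> 1 / 1) at_top"
    by (rule Lim_transform_eventually)
  then show ?thesis
    by simp
qed

lemma is_pcf_U_unique:
  assumes f: "is_pcf_U a f" and g: "is_pcf_U a g"
  shows "f = g"
proof -
  obtain f' g' where "weber_solution a f f'" "weber_solution a g g'"
    using f g unfolding is_pcf_U_def by blast
  then have f1: "\<And>x. (f has_real_derivative f' x) (at x)"
    and f2: "\<And>x. (f' has_real_derivative (x^2/4 + a) * f x) (at x)"
    and g1: "\<And>x. (g has_real_derivative g' x) (at x)"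
    and g2: "\<And>x. (g' has_real_derivative (x^2/4 + a) * g x) (at x)"
    unfolding weber_solution_def by blast+
  define w where "w = (\<lambda>x. f x - g x)"
  define w' where "w' = (\<lambda>x. f' x - g' x)"
  have w: "(w has_real_derivative w' x) (at x)"
    and w': "(w' has_real_derivative (x^2/4 + a) * w x) (at x)" for x
    unfolding w_def w'_def by (auto intro!: derivative_eq_intros f1 f2 g1 g2 simp: field_simps)
  have "\<forall>\<^sub>F x in at_top. w x = 0"
  proof (rule linear_ode_eventually_zero_if_ratio_tendsto_zero[OF f1 f2 w w'])
    show "(f \<longlongrightarrow> 0) at_top"
      by (rule is_pcf_U_tendsto_zero[OF f])
    show "\<forall>\<^sub>F x in at_top. f x \<noteq> 0"
      using is_pcf_U_eventually_pos[OF f] by eventually_elim simp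
    have "((\<lambda>x. 1 - g x / f x) \<longlongrightarrow> 1 - 1) at_top"
      by (intro tendsto_diff tendsto_const is_pcf_U_ratio_tendsto[OF f g])
    moreover have "\<forall>\<^sub>F x in at_top. 1 - g x / f x = w x / f x"
      using is_pcf_U_eventually_pos[OF f] by eventually_elim (simp add: w_def diff_divide_distrib)
    ultimately have "((\<lambda>x. w x / f x) \<longlongrightarrow> 1 - 1) at_top"
      by (rule Lim_transform_eventually)
    then show "((\<lambda>x. w x / f x) \<longlongrightarrow> 0) at_top"
      by simp
  qed
  then have "w y = 0" for y
    by (rule linear_ode_eventually_zero_imp_zero[OF _ w w', rotated]) (auto intro!: continuous_intros)
  then show ?thesis
    by (auto simp: fun_eq_iff w_def)
qed

lemma pcf_U_eqI:
  assumes "weber_solution a f f'"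
    and "((\<lambda>x. f x / (x powr (-a - 1/2) * exp (-(x^2)/4))) \<longlongrightarrow> 1) at_top"
  shows "pcf_U a = f"
proof -
  have "pcf_U a = (THE f. is_pcf_U a f)"
    unfolding pcf_U_def is_pcf_U_def weber_solution_def ..
  moreover have "is_pcf_U a f"
    using assms unfolding is_pcf_U_def by blast
  ultimately show ?thesis
    using is_pcf_U_unique by (metis the_equality)
qed

section \<open>Explicit recessive solutions\<close>

text \<open>The recurrence \<open>U(a - 1, x) = x/2 U(a, x) - U'(a, x)\<close> (DLMF 12.8.3).\<close>

lemma weber_solution_lower:
  assumes "weber_solution a f f'" and "\<And>x. g x = x/2 * f x - f' x"
  shows "weber_solution (a - 1) g (\<lambda>x. f x / 2 + x/2 * f' x - (x^2/4 + a) * f x)"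
proof -
  have f1: "\<And>x. (f has_real_derivative f' x) (at x)"
    and f2: "\<And>x. (f' has_real_derivative (x^2/4 + a) * f x) (at x)"
    using assms(1) unfolding weber_solution_def by blast+
  have "g = (\<lambda>x. x/2 * f x - f' x)"
    using assms(2) by (simp add: fun_eq_iff)
  then show ?thesis
    unfolding weber_solution_def
    by (auto intro!: derivative_eq_intros f1 f2 simp: field_simps power2_eq_square)
qed

lemma has_real_derivative_gaussian_mult:
  assumes "(h has_real_derivative h') (at x)"
  shows "((\<lambda>x. exp (-(x^2)/4) * h x) has_real_derivative exp (-(x^2)/4) * (h' - x/2 * h x)) (at x)"
  by (auto intro!: derivative_eq_intros assms simp: algebra_simps)

lemma pcf_integral_weber_solution:
  fixes k :: real
  assumes k: "k > 0"
  defines "V \<equiv> pcf_integral"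
  shows "weber_solution (k - 1/2) (\<lambda>x. exp (-(x^2)/4) * V k x / Gamma k)
           (\<lambda>x. exp (-(x^2)/4) * (- V (k + 1) x - x/2 * V k x) / Gamma k)"
  unfolding weber_solution_def
proof (intro allI conjI)
  fix x :: real
  have V0: "(V k has_real_derivative - V (k + 1) x) (at x)"
    and V1: "(V (k + 1) has_real_derivative - V (k + 2) x) (at x)"
    using pcf_integral_has_derivative[of k x] pcf_integral_has_derivative[of "k + 1" x] k
    by (simp_all add: V_def add.assoc)
  show "((\<lambda>x. exp (-(x^2)/4) * V k x / Gamma k) has_real_derivative
           exp (-(x^2)/4) * (- V (k + 1) x - x/2 * V k x) / Gamma k) (at x)"
    by (intro DERIV_cdivide has_real_derivative_gaussian_mult V0)
  have "((\<lambda>x. - V (k + 1) x - x/2 * V k x) has_real_derivative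
           - (- V (k + 2) x) - (1/2 * V k x + - V (k + 1) x * (x/2))) (at x)"
    by (rule DERIV_diff[OF DERIV_minus[OF V1] DERIV_mult[OF DERIV_cdivide[OF DERIV_ident] V0]])
  then have D: "((\<lambda>x. exp (-(x^2)/4) * (- V (k + 1) x - x/2 * V k x) / Gamma k) has_real_derivative
           exp (-(x^2)/4) * ((- (- V (k + 2) x) - (1/2 * V k x + - V (k + 1) x * (x/2)))
             - x/2 * (- V (k + 1) x - x/2 * V k x)) / Gamma k) (at x)"
    by (intro DERIV_cdivide has_real_derivative_gaussian_mult)
  have recurrence: "V (k + 2) x = k * V k x - x * V (k + 1) x"
    using pcf_integral_recurrence[OF k, of x] unfolding V_def by simp
  have Gamma_k: "Gamma k \<noteq> 0"
    using Gamma_real_pos[OF k] by linarith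
  show "((\<lambda>x. exp (-(x^2)/4) * (- V (k + 1) x - x/2 * V k x) / Gamma k) has_real_derivative
           (x^2/4 + (k - 1/2)) * (exp (-(x^2)/4) * V k x / Gamma k)) (at x)"
    by (rule DERIV_cong[OF D[unfolded recurrence]]) (use Gamma_k in \<open>simp add: field_simps power2_eq_square\<close>)
qed

lemma pcf_U_eq_integral:
  fixes k :: real
  assumes k: "k > 0"
  shows "pcf_U (k - 1/2) = (\<lambda>x. exp (-(x^2)/4) * pcf_integral k x / Gamma k)"
proof (rule pcf_U_eqI[OF pcf_integral_weber_solution[OF k]])
  have Gamma_k: "Gamma k \<noteq> 0"
    using Gamma_real_pos[OF k] by linarith
  have "((\<lambda>x. x powr k * pcf_integral k x / Gamma k) \<longlongrightarrow> Gamma k / Gamma k) at_top"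
    by (intro tendsto_divide pcf_integral_asymptotic k tendsto_const Gamma_k)
  moreover have "\<forall>\<^sub>F x in at_top. x powr k * pcf_integral k x / Gamma k
      = exp (-(x^2)/4) * pcf_integral k x / Gamma k / (x powr (-(k - 1/2) - 1/2) * exp (-(x^2)/4))"
    using eventually_gt_at_top[of 0] by eventually_elim (simp add: powr_minus field_simps)
  ultimately show "((\<lambda>x. exp (-(x^2)/4) * pcf_integral k x / Gamma k
      / (x powr (-(k - 1/2) - 1/2) * exp (-(x^2)/4))) \<longlongrightarrow> 1) at_top"
    using Gamma_k by (simp add: tendsto_cong)
qed

lemma pcf_U_eq_integral_lowered:
  fixes k :: real
  assumes k: "k > 0"
  shows "pcf_U (k - 3/2)
         = (\<lambda>x. exp (-(x^2)/4) * (x * pcf_integral k x + pcf_integral (k + 1) x) / Gamma k)"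
proof -
  have Gamma_k: "Gamma k \<noteq> 0"
    using Gamma_real_pos[OF k] by linarith
  have "pcf_U (k - 1/2 - 1)
        = (\<lambda>x. exp (-(x^2)/4) * (x * pcf_integral k x + pcf_integral (k + 1) x) / Gamma k)"
  proof (rule pcf_U_eqI[OF weber_solution_lower[OF pcf_integral_weber_solution[OF k]]])
    show "exp (-(x^2)/4) * (x * pcf_integral k x + pcf_integral (k + 1) x) / Gamma k
          = x/2 * (exp (-(x^2)/4) * pcf_integral k x / Gamma k)
            - exp (-(x^2)/4) * (- pcf_integral (k + 1) x - x/2 * pcf_integral k x) / Gamma k" for x
      using Gamma_k by (simp add: field_simps)
    have "((\<lambda>x. (x powr k * pcf_integral k x + x powr (k + 1) * pcf_integral (k + 1) x * (1 / x^2))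
                 / Gamma k) \<longlongrightarrow> (Gamma k + Gamma (k + 1) * 0) / Gamma k) at_top"
      using k Gamma_k by (intro tendsto_intros pcf_integral_asymptotic) (simp_all, real_asymp)
    moreover have "\<forall>\<^sub>F x in at_top.
        (x powr k * pcf_integral k x + x powr (k + 1) * pcf_integral (k + 1) x * (1 / x^2)) / Gamma k
        = exp (-(x^2)/4) * (x * pcf_integral k x + pcf_integral (k + 1) x) / Gamma k
            / (x powr (-(k - 1/2 - 1) - 1/2) * exp (-(x^2)/4))"
      using eventually_gt_at_top[of 0]
    proof eventually_elim
      case (elim x)
      have "x powr (-(k - 1/2 - 1) - 1/2) = x / x powr k"
        using elim powr_diff[of x 1 k] by simp
      moreover have "x powr (k + 1) = x powr k * x"
        using elim by (simp add: powr_add)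
      ultimately show ?case
        using elim Gamma_k by (simp add: field_simps power2_eq_square)
    qed
    ultimately show "((\<lambda>x. exp (-(x^2)/4) * (x * pcf_integral k x + pcf_integral (k + 1) x) / Gamma k
        / (x powr (-(k - 1/2 - 1) - 1/2) * exp (-(x^2)/4))) \<longlongrightarrow> 1) at_top"
      using Gamma_k by (simp add: tendsto_cong)
  qed
  moreover have "k - 1/2 - 1 = k - 3/2" by simp
  ultimately show ?thesis by simp
qed

lemma weber_solution_gaussian:
  "weber_solution (-1/2) (\<lambda>x. exp (-(x^2)/4)) (\<lambda>x. exp (-(x^2)/4) * (-(x/2)))"
  unfolding weber_solution_def
  by (auto intro!: derivative_eq_intros simp: field_simps power2_eq_square)

lemma pcf_U_minus_half: "pcf_U (-1/2) = (\<lambda>x. exp (-(x^2)/4))"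
  by (rule pcf_U_eqI[OF weber_solution_gaussian], rule tendsto_eventually,
      rule eventually_mono[OF eventually_gt_at_top[of 0]]) simp

lemma pcf_U_minus_three_halves: "pcf_U (-3/2) = (\<lambda>x. x * exp (-(x^2)/4))"
proof -
  have "pcf_U (-1/2 - 1) = (\<lambda>x. x * exp (-(x^2)/4))"
  proof (rule pcf_U_eqI[OF weber_solution_lower[OF weber_solution_gaussian]])
    show "x * exp (-(x^2)/4) = x/2 * exp (-(x^2)/4) - exp (-(x^2)/4) * (-(x/2))" for x :: real
      by (simp add: algebra_simps)
    show "((\<lambda>x::real. x * exp (-(x^2)/4) / (x powr (-(-1/2 - 1) - 1/2) * exp (-(x^2)/4)))
            \<longlongrightarrow> 1) at_top"
      by (rule tendsto_eventually, rule eventually_mono[OF eventually_gt_at_top[of 0]]) simp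
  qed
  then show ?thesis by simp
qed

lemma pcf_U_ratio_eq:
  fixes n x :: real
  assumes "n > -1/2"
  defines "k \<equiv> n + 1/2"
  shows "pcf_U n x / pcf_U (n - 1) x
         = pcf_integral k x / (x * pcf_integral k x + pcf_integral (k + 1) x)"
proof -
  define V W where "V = pcf_integral k x" and "W = pcf_integral (k + 1) x"
  have k: "k > 0" and n: "n = k - 1/2" "n - 1 = k - 3/2"
    using assms by simp_all
  have "pcf_U n x / pcf_U (n - 1) x
        = (exp (-(x^2)/4) / Gamma k * V) / (exp (-(x^2)/4) / Gamma k * (x * V + W))"
    unfolding n(2) unfolding n(1) pcf_U_eq_integral[OF k] pcf_U_eq_integral_lowered[OF k] V_def W_def
    by simp
  also have "\<dots> = V / (x * V + W)"
    by (rule mult_divide_mult_cancel_left) (use Gamma_real_pos[OF k] in simp)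
  finally show ?thesis
    unfolding V_def W_def .
qed

lemma ratio_compare_iff:
  fixes V W x c :: real
  assumes "V > 0" "W > 0" "x \<ge> 0" "c > 0"
  defines "R \<equiv> 2 / (x + sqrt (x^2 + 4*c))"
  shows "R < V / (x*V + W) \<longleftrightarrow> W^2 + x*V*W < c * V^2"
    and "V / (x*V + W) < R \<longleftrightarrow> c * V^2 < W^2 + x*V*W"
proof -
  define s where "s = sqrt (x^2 + 4*c)"
  define lhs rhs where "lhs = x*V + 2*W" and "rhs = V * s"
  have s: "s > 0" "s^2 = x^2 + 4*c"
    using assms by (simp_all add: s_def add_nonneg_pos)
  have pos: "x*V + W > 0" "x + s > 0" "lhs \<ge> 0" "rhs \<ge> 0"
    using assms s by (auto simp: lhs_def rhs_def intro: add_nonneg_pos)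
  have squares: "a < b \<longleftrightarrow> a^2 < b^2" if "a \<ge> 0" "b \<ge> 0" for a b :: real
    using power_mono_iff[OF that(2,1), of 2] by (simp add: not_le[symmetric])
  have "rhs^2 = V^2 * (x^2 + 4*c)"
    by (simp add: rhs_def power_mult_distrib s(2))
  then have diff: "lhs^2 - rhs^2 = 4 * (W^2 + x*V*W - c * V^2)"
    by (simp add: lhs_def power2_eq_square algebra_simps)
  have compare1: "a < b \<longleftrightarrow> t < u" and compare2: "b < a \<longleftrightarrow> u < t"
    if "a - b = 4 * (t - u)" for a b t u :: real
    using that by auto
  have "R < V / (x*V + W) \<longleftrightarrow> lhs < rhs" and "V / (x*V + W) < R \<longleftrightarrow> rhs < lhs"
    using pos unfolding R_def s_def[symmetric] lhs_def rhs_def by (auto simp: field_simps)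
  moreover have "lhs < rhs \<longleftrightarrow> W^2 + x*V*W < c * V^2"
    unfolding squares[OF pos(3,4)] by (rule compare1[OF diff])
  moreover have "rhs < lhs \<longleftrightarrow> c * V^2 < W^2 + x*V*W"
    unfolding squares[OF pos(4,3)] by (rule compare2[OF diff])
  ultimately show "R < V / (x*V + W) \<longleftrightarrow> W^2 + x*V*W < c * V^2"
    and "V / (x*V + W) < R \<longleftrightarrow> c * V^2 < W^2 + x*V*W"
    by simp_all
qed

lemma pcf_U_ratio_lower:
  fixes n x :: real
  assumes n: "n > -1/2" and x: "x \<ge> 0"
  shows "2 / (x + sqrt (4*n + 2 + x^2)) < pcf_U n x / pcf_U (n - 1) x"
proof -
  define k where "k = n + 1/2"
  define V W where "V = pcf_integral k x" and "W = pcf_integral (k + 1) x"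
  have k: "k > 0" using n by (simp add: k_def)
  have "pcf_integral (k + 2) x = k * V - x * W"
    using pcf_integral_recurrence[OF k, of x] by (simp add: V_def W_def)
  then have "W^2 < V * (k * V - x * W)"
    using pcf_integral_strict_log_convex[OF k, of x]
    by (simp only: V_def[symmetric] W_def[symmetric])
  then have "W^2 + x*V*W < k * V^2"
    by (simp add: power2_eq_square algebra_simps)
  then have "2 / (x + sqrt (x^2 + 4*k)) < V / (x*V + W)"
    using ratio_compare_iff(1)[of V W x k] pcf_integral_pos k x by (simp add: V_def W_def)
  then show ?thesis
    using pcf_U_ratio_eq[OF n, of x] by (simp add: V_def W_def k_def algebra_simps)
qed

lemma pcf_U_ratio_upper:
  fixes n x :: real
  assumes n: "n > 1/2" and x: "x \<ge> 0"
  shows "pcf_U n x / pcf_U (n - 1) x < 2 / (x + sqrt (4*n - 2 + x^2))"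
proof -
  define k where "k = n + 1/2"
  define U V W where "U = pcf_integral (k - 1) x" and "V = pcf_integral k x"
    and "W = pcf_integral (k + 1) x"
  have k: "k - 1 > 0" using n by (simp add: k_def)
  have log_convex: "V^2 < U * W" and recurrence: "W + x * V = (k - 1) * U"
    using pcf_integral_strict_log_convex[OF k, of x] pcf_integral_recurrence[OF k, of x]
    by (simp_all add: U_def V_def W_def algebra_simps)
  have "(k - 1) * V^2 < (k - 1) * (U * W)"
    using log_convex k by simp
  also have "\<dots> = (W + x * V) * W"
    by (simp only: recurrence mult.assoc)
  finally have "(k - 1) * V^2 < W^2 + x*V*W"
    by (simp add: power2_eq_square algebra_simps)
  then have "V / (x*V + W) < 2 / (x + sqrt (x^2 + 4*(k - 1)))"
    using ratio_compare_iff(2)[of V W x "k - 1"] pcf_integral_pos[of k] pcf_integral_pos[of "k + 1"]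
      x k by (simp add: V_def W_def)
  then show ?thesis
    using pcf_U_ratio_eq[of n x] n by (simp add: V_def W_def k_def algebra_simps)
qed

lemma pcf_U_ratio_minus_half:
  fixes n x :: real
  assumes "n = -1/2" "x \<ge> 0"
  shows "pcf_U n x / pcf_U (n - 1) x = 2 / (x + sqrt (4*n + 2 + x^2))"
proof -
  have "n - 1 = -3/2" using assms(1) by simp
  then have "pcf_U n x / pcf_U (n - 1) x = exp (-(x^2)/4) / (x * exp (-(x^2)/4))"
    unfolding pcf_U_minus_three_halves[folded \<open>n - 1 = -3/2\<close>]
      pcf_U_minus_half[folded assms(1)] by simp
  then show ?thesis
    using assms by (cases "x = 0") simp_all
qed

theorem theorem9:
  fixes n x :: real
  assumes "x \<ge> 0"
  shows "(n > 1/2 \<longrightarrow>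
            2 / (x + sqrt (4*n + 2 + x^2)) < pcf_U n x / pcf_U (n - 1) x \<and>
            pcf_U n x / pcf_U (n - 1) x < 2 / (x + sqrt (4*n - 2 + x^2)))
       \<and> (-1/2 < n \<and> n < 1/2 \<longrightarrow>
            2 / (x + sqrt (4*n + 2 + x^2)) < pcf_U n x / pcf_U (n - 1) x)
       \<and> (n = -1/2 \<longrightarrow>
            pcf_U n x / pcf_U (n - 1) x = 2 / (x + sqrt (4*n + 2 + x^2)))"
  using pcf_U_ratio_lower[OF _ assms, of n] pcf_U_ratio_upper[OF _ assms, of n]
    pcf_U_ratio_minus_half[OF _ assms, of n]
  by auto

end
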